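(* For all integers $n\ge 0$ and $\alpha\ge 0$, \[\overline{p}\big(4^{\alpha}(40n+35)\big)\equiv 0 \pmod 5,\] and \[\overline{p}(5\cdot 4^{\alpha+1} n)\equiv (-1)^n\,\overline{p}(5n) \pmod 5.\]
   Context: An overpartition of a nonnegative integer $n$ is a partition of $n$ in which the first occurrence of each distinct part may (or may not) be overlined; $\overline{p}(n)$ denotes the number of overpartitions of $n$ (with $\overline{p}(0)=1$). Equivalently, $\sum_{n\ge0}\overline{p}(n)q^n=\prod_{k\ge1}\frac{1+q^k}{1-q^k}$. *)

theory Defs
  imports Main "HOL-Library.Multiset" "HOL-Number_Theory.Cong"
begin

text \<open>A partition of n is a multiset of positive integers summing to n. An overpartition
  of n is a partition M of n together with a set S of distinct parts of M whose first
  occurrence is overlined.\<close>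

definition overpartitions :: "nat \<Rightarrow> (nat multiset \<times> nat set) set" where
  "overpartitions n = {(M, S). (\<forall>x \<in># M. x > 0) \<and> sum_mset M = n \<and> S \<subseteq> set_mset M}"

definition overpartition_count :: "nat \<Rightarrow> nat" where
  "overpartition_count n = card (overpartitions n)"

end

theory Submission
  imports Defs
    "HOL-Computational_Algebra.Formal_Laurent_Series"
    "HOL-Computational_Algebra.Primes"
begin

text \<open>
  The proof follows the generating-function route.
  \<^item> Overpartitions with parts at most \<open>K\<close> obey a simple recurrence, so their generating
    function is \<open>\<Prod>k\<le>K. (1 + q\<^sup>k)/(1 - q\<^sup>k)\<close> (recorded without division).
  \<^item> A finite form of Jacobi's triple product for Gaussian binomials in \<open>q\<^sup>2\<close>, combined
    with truncation below a fixed degree, yields Gauss's identity \<open>theta \<cdot> P = 1\<close> for the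
    overpartition series \<open>P\<close> and \<open>theta = \<Sum>k\<in>\<int>. (-1)\<^sup>k q\<^bsup>k\<^sup>2\<^esup>\<close>.
  \<^item> The Frobenius congruence \<open>f\<^sup>p \<equiv> f(q\<^sup>p) (mod p)\<close> gives \<open>P \<equiv> theta\<^bsup>p-1\<^esup> P(q\<^sup>p)\<close>;
    reading off coefficients at multiples of \<open>p\<close> shows \<open>p\<^bsup>-\<^esup>(pn) \<equiv> [q\<^sup>n] theta\<^bsup>p-2\<^esup>\<close>,
    provided the \<open>p\<close>-section of \<open>theta\<^bsup>p-1\<^esup>\<close> is congruent to \<open>theta\<^bsup>p-1\<^esup>\<close>.
  \<^item> For \<open>p = 5\<close> that proviso is \<open>r\<^sub>4(5n) \<equiv> r\<^sub>4(n) (mod 5)\<close>, proved by double counting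
    with quaternions of norm 5.  Since \<open>theta\<^sup>3\<close> counts sums of three squares with sign,
    \<open>p\<^bsup>-\<^esup>(5n) \<equiv> (-1)\<^sup>n r\<^sub>3(n) (mod 5)\<close>.
  \<^item> Both congruences of \<open>corollary1\<close> then follow from \<open>r\<^sub>3(8n + 7) = 0\<close> and
    \<open>r\<^sub>3(4n) = r\<^sub>3(n)\<close>.
\<close>

definition bounded_overpartitions :: "nat \<Rightarrow> nat \<Rightarrow> (nat multiset \<times> nat set) set" where
  "bounded_overpartitions K n =
     {(M, S). (\<forall>x\<in>#M. 0 < x \<and> x \<le> K) \<and> sum_mset M = n \<and> S \<subseteq> set_mset M}"

lemma part_le_sum_mset: "x \<in># M \<Longrightarrow> x \<le> sum_mset (M :: nat multiset)"
  using sum_mset.remove by fastforce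

lemma size_le_sum_mset: "\<forall>x\<in>#M. 0 < x \<Longrightarrow> size M \<le> sum_mset (M :: nat multiset)"
  by (induction M) auto

text \<open>A part never exceeds the number partitioned, so a bound \<open>K \<ge> n\<close> is no restriction.\<close>

lemma overpartitions_eq_bounded: "n \<le> K \<Longrightarrow> overpartitions n = bounded_overpartitions K n"
  unfolding overpartitions_def bounded_overpartitions_def using part_le_sum_mset by fastforce

lemma finite_overpartitions: "finite (overpartitions n)"
proof (rule finite_subset)
  show "overpartitions n \<subseteq> (\<Union>k\<le>n. multisets_of_size {1..n} k) \<times> Pow {1..n}"
  proof
    fix p assume "p \<in> overpartitions n"
    then obtain M S where p: "p = (M, S)" and pos: "\<forall>x\<in>#M. 0 < x"
      and sum: "sum_mset M = n" and sub: "S \<subseteq> set_mset M"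
      by (auto simp: overpartitions_def)
    have parts: "set_mset M \<subseteq> {1..n}"
      using pos sum part_le_sum_mset by fastforce
    moreover have "size M \<le> n" using size_le_sum_mset[OF pos] sum by simp
    ultimately show "p \<in> (\<Union>k\<le>n. multisets_of_size {1..n} k) \<times> Pow {1..n}"
      using p sub by (auto simp: multisets_of_size_def)
  qed
qed auto

lemma finite_bounded_overpartitions: "finite (bounded_overpartitions K n)"
  by (rule finite_subset[OF _ finite_overpartitions[of n]])
    (auto simp: overpartitions_def bounded_overpartitions_def)

lemma bounded_overpartitions_0: "bounded_overpartitions 0 n = (if n = 0 then {({#}, {})} else {})"
proof -
  have "(\<forall>x\<in>#M. 0 < x \<and> x \<le> (0::nat)) \<longleftrightarrow> M = {#}" for M
    by (cases M) auto
  then show ?thesis by (auto simp: bounded_overpartitions_def)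
qed

lemma bij_add_part:
  assumes "0 < k" "k \<le> K"
  shows "bij_betw (\<lambda>(M, S). (add_mset k M, S)) (bounded_overpartitions K n)
           {p \<in> bounded_overpartitions K (n + k). k \<in># fst p \<and> (k \<in> snd p \<longrightarrow> 2 \<le> count (fst p) k)}"
    (is "bij_betw _ _ ?A")
proof (rule bij_betwI[where g = "\<lambda>(M, S). (M - {#k#}, S)"])
  show "(\<lambda>(M, S). (add_mset k M, S)) \<in> bounded_overpartitions K n \<rightarrow> ?A"
    using assms by (auto simp: bounded_overpartitions_def)
  show "(\<lambda>(M, S). (M - {#k#}, S)) \<in> ?A \<rightarrow> bounded_overpartitions K n"
  proof
    fix p assume "p \<in> ?A"
    then obtain M S where p: "p = (M, S)" and M: "(M, S) \<in> bounded_overpartitions K (n + k)"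
      "k \<in># M" and twice: "k \<in> S \<longrightarrow> 2 \<le> count M k"
      by (cases p) auto
    have "sum_mset (M - {#k#}) = n"
      using M sum_mset.remove[of k M] by (auto simp: bounded_overpartitions_def)
    moreover have "S \<subseteq> set_mset (M - {#k#})"
      using M twice by (auto simp: bounded_overpartitions_def in_diff_count)
    ultimately show "(\<lambda>(M, S). (M - {#k#}, S)) p \<in> bounded_overpartitions K n"
      using M p by (auto simp: bounded_overpartitions_def dest: in_diffD)
  qed
qed (auto simp: bounded_overpartitions_def)

lemma bij_add_overlined_part:
  fixes K n :: nat
  defines "k \<equiv> Suc K"
  shows "bij_betw (\<lambda>(M, S). (add_mset k M, insert k S)) (bounded_overpartitions K n)
           {p \<in> bounded_overpartitions k (n + k). k \<in> snd p \<and> count (fst p) k = 1}"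
    (is "bij_betw _ _ ?A")
proof (rule bij_betwI[where g = "\<lambda>(M, S). (M - {#k#}, S - {k})"])
  have no_k: "k \<notin># M" "k \<notin> S" if "(M, S) \<in> bounded_overpartitions K n" for M S
    using that unfolding k_def bounded_overpartitions_def by fastforce+
  show "(\<lambda>(M, S). (add_mset k M, insert k S)) \<in> bounded_overpartitions K n \<rightarrow> ?A"
  proof
    fix p assume "p \<in> bounded_overpartitions K n"
    moreover obtain M S where p: "p = (M, S)" by (cases p)
    ultimately have "(M, S) \<in> bounded_overpartitions K n" "count M k = 0"
      using no_k[of M S] by (auto simp: not_in_iff)
    then show "(\<lambda>(M, S). (add_mset k M, insert k S)) p \<in> ?A"
      unfolding p k_def bounded_overpartitions_def by (auto simp: le_Suc_eq)
  qed
  show "(\<lambda>(M, S). (M - {#k#}, S - {k})) \<in> ?A \<rightarrow> bounded_overpartitions K n"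
  proof
    fix p assume "p \<in> ?A"
    then obtain M S where p: "p = (M, S)" and M: "(M, S) \<in> bounded_overpartitions k (n + k)"
      and once: "k \<in> S" "count M k = 1"
      by (cases p) auto
    have parts: "\<forall>x\<in>#M. 0 < x \<and> x \<le> k" and sub: "S \<subseteq> set_mset M"
      using M by (auto simp: bounded_overpartitions_def)
    have "sum_mset (M - {#k#}) = n"
      using M once sum_mset.remove[of k M] by (auto simp: bounded_overpartitions_def)
    moreover have "0 < x \<and> x \<le> K" if "x \<in># M - {#k#}" for x
    proof -
      have "x \<noteq> k" using that once by (auto simp: in_diff_count)
      then show ?thesis using parts in_diffD[OF that] unfolding k_def by fastforce
    qed
    moreover have "S - {k} \<subseteq> set_mset (M - {#k#})"
    proof
      fix x assume "x \<in> S - {k}"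
      then have "x \<in># M" "x \<noteq> k" using sub by auto
      then show "x \<in># M - {#k#}" by (simp add: in_diff_count)
    qed
    ultimately show "(\<lambda>(M, S). (M - {#k#}, S - {k})) p \<in> bounded_overpartitions K n"
      unfolding p bounded_overpartitions_def by auto
  qed
  show "(\<lambda>(M, S). (M - {#k#}, S - {k})) ((\<lambda>(M, S). (add_mset k M, insert k S)) p) = p"
    if "p \<in> bounded_overpartitions K n" for p
    using that no_k by (cases p) auto
  show "(\<lambda>(M, S). (add_mset k M, insert k S)) ((\<lambda>(M, S). (M - {#k#}, S - {k})) q) = q"
    if "q \<in> ?A" for q
    using that by (cases q) (auto simp: bounded_overpartitions_def insert_absorb insert_DiffM)
qed

text \<open>The basic recurrence: classify by whether \<open>K + 1\<close> is absent, present and removable as a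
  plain part, or present exactly once and overlined.\<close>

lemma card_bounded_overpartitions_Suc:
  fixes K n :: nat
  defines "k \<equiv> Suc K"
  shows "card (bounded_overpartitions k (n + k)) =
           card (bounded_overpartitions K (n + k)) + card (bounded_overpartitions k n)
           + card (bounded_overpartitions K n)"
proof -
  let ?B = "bounded_overpartitions k (n + k)"
  define A1 where "A1 = {p \<in> ?B. k \<notin># fst p}"
  define A2 where "A2 = {p \<in> ?B. k \<in># fst p \<and> (k \<in> snd p \<longrightarrow> 2 \<le> count (fst p) k)}"
  define A3 where "A3 = {p \<in> ?B. k \<in> snd p \<and> count (fst p) k = 1}"
  have "?B = A1 \<union> A2 \<union> A3"
  proof -
    have "count M k = 1" if "k \<in># M" "\<not> 2 \<le> count M k" for M
      using that by (simp add: not_le) (metis count_greater_zero_iff less_2_cases not_gr0)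
    then show ?thesis unfolding A1_def A2_def A3_def by auto
  qed
  moreover have "A1 \<inter> A2 = {}"
    unfolding A1_def A2_def by auto
  moreover have "(A1 \<union> A2) \<inter> A3 = {}"
    unfolding A1_def A2_def A3_def by (auto simp: not_in_iff)
  moreover have "finite A1" "finite A2" "finite A3"
    unfolding A1_def A2_def A3_def using finite_bounded_overpartitions by auto
  ultimately have "card ?B = card A1 + card A2 + card A3"
    by (simp add: card_Un_disjoint)
  moreover have "A1 = bounded_overpartitions K (n + k)"
    unfolding A1_def k_def bounded_overpartitions_def by (auto simp: le_Suc_eq) (metis Suc_n_not_le_n)
  moreover have "card A2 = card (bounded_overpartitions k n)"
    unfolding A2_def k_def using bij_add_part[of "Suc K" "Suc K" n] by (simp add: bij_betw_same_card)
  moreover have "card A3 = card (bounded_overpartitions K n)"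
    unfolding A3_def k_def using bij_add_overlined_part[of K n] by (simp add: bij_betw_same_card)
  ultimately show ?thesis by simp
qed

fun qprod :: "(nat \<Rightarrow> nat) \<Rightarrow> nat \<Rightarrow> int fps" where
  "qprod e 0 = 1"
| "qprod e (Suc K) = qprod e K * (1 - fps_X ^ e (Suc K))"

definition poch :: "nat \<Rightarrow> int fps" where "poch = qprod (\<lambda>k. k)"
definition poch_even :: "nat \<Rightarrow> int fps" where "poch_even = qprod (\<lambda>k. 2 * k)"
definition poch_odd :: "nat \<Rightarrow> int fps" where "poch_odd = qprod (\<lambda>k. 2 * k - 1)"

lemma poch_simps [simp]:
  "poch 0 = 1" "poch (Suc K) = poch K * (1 - fps_X ^ Suc K)"
  "poch_even 0 = 1" "poch_even (Suc K) = poch_even K * (1 - fps_X ^ (2 * Suc K))"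
  "poch_odd 0 = 1" "poch_odd (Suc K) = poch_odd K * (1 - fps_X ^ (2 * K + 1))"
  by (simp_all add: poch_def poch_even_def poch_odd_def)

lemma poch_double: "poch (2 * M) = poch_odd M * poch_even M"
proof (induction M)
  case (Suc M)
  have "poch (2 * Suc M) = poch (2 * M) * (1 - fps_X ^ (2 * M + 1)) * (1 - fps_X ^ (2 * Suc M))"
    by (simp add: numeral_2_eq_2)
  then show ?case using Suc by (simp add: ac_simps)
qed simp

lemma one_plus_times_one_minus:
  "(1 + fps_X ^ k) * (1 - fps_X ^ k) = (1 - fps_X ^ (2 * k) :: 'a::comm_ring_1 fps)"
proof -
  have "fps_X ^ (2 * k) = fps_X ^ k * (fps_X ^ k :: 'a fps)"
    by (simp only: mult_2 power_add)
  then show ?thesis by (simp add: algebra_simps)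
qed

definition bounded_overpartition_fps :: "nat \<Rightarrow> int fps" where
  "bounded_overpartition_fps K = Abs_fps (\<lambda>n. int (card (bounded_overpartitions K n)))"

definition overpartition_fps :: "int fps" where
  "overpartition_fps = Abs_fps (\<lambda>n. int (overpartition_count n))"

lemma overpartition_fps_nth_bounded:
  "n \<le> K \<Longrightarrow> overpartition_fps $ n = bounded_overpartition_fps K $ n"
  by (simp add: overpartition_fps_def bounded_overpartition_fps_def overpartition_count_def
      overpartitions_eq_bounded)

lemma fps_nth_times_one_minus_X_power:
  fixes f :: "'a::comm_ring_1 fps"
  shows "(f * (1 - fps_X ^ k)) $ n = f $ n - (if n < k then 0 else f $ (n - k))"
  by (simp add: right_diff_distrib fps_X_power_mult_right_nth)

lemma fps_nth_times_one_plus_X_power: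
  fixes f :: "'a::comm_ring_1 fps"
  shows "(f * (1 + fps_X ^ k)) $ n = f $ n + (if n < k then 0 else f $ (n - k))"
  by (simp add: distrib_left fps_X_power_mult_right_nth)

lemma bounded_overpartition_fps_Suc:
  "bounded_overpartition_fps (Suc K) * (1 - fps_X ^ Suc K) =
     bounded_overpartition_fps K * (1 + fps_X ^ Suc K)"
proof (rule fps_ext)
  fix n
  show "(bounded_overpartition_fps (Suc K) * (1 - fps_X ^ Suc K)) $ n =
        (bounded_overpartition_fps K * (1 + fps_X ^ Suc K)) $ n"
  proof (cases "n < Suc K")
    case True
    then have "overpartitions n = bounded_overpartitions (Suc K) n"
      "overpartitions n = bounded_overpartitions K n"
      by (simp_all add: overpartitions_eq_bounded)
    then show ?thesis using True
      unfolding fps_nth_times_one_minus_X_power fps_nth_times_one_plus_X_power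
      by (simp add: bounded_overpartition_fps_def)
  next
    case False
    then obtain m where "n = m + Suc K" by (metis add.commute le_Suc_ex not_less)
    then show ?thesis
      unfolding fps_nth_times_one_minus_X_power fps_nth_times_one_plus_X_power
      using card_bounded_overpartitions_Suc[of K m] by (simp add: bounded_overpartition_fps_def)
  qed
qed

text \<open>Hence \<open>\<Prod>k\<le>K. (1 + q\<^sup>k)/(1 - q\<^sup>k)\<close> is the generating function of overpartitions with
  parts at most \<open>K\<close>; we record it without division.\<close>

lemma bounded_overpartition_fps_product:
  "bounded_overpartition_fps K * poch K ^ 2 = poch_even K"
proof (induction K)
  case 0
  show ?case
    by (simp add: fps_eq_iff bounded_overpartition_fps_def bounded_overpartitions_0)
next
  case (Suc K)
  let ?f = "bounded_overpartition_fps" and ?x = "fps_X ^ Suc K :: int fps"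
  have "?f (Suc K) * poch (Suc K) ^ 2 = (?f (Suc K) * (1 - ?x)) * (1 - ?x) * poch K ^ 2"
    by (simp add: power2_eq_square ac_simps)
  also have "\<dots> = (?f K * poch K ^ 2) * ((1 + ?x) * (1 - ?x))"
    by (simp only: bounded_overpartition_fps_Suc ac_simps)
  also have "\<dots> = poch_even (Suc K)"
    using Suc by (simp only: one_plus_times_one_minus) simp
  finally show ?case .
qed

definition eq_upto :: "nat \<Rightarrow> 'a::comm_ring_1 fps \<Rightarrow> 'a fps \<Rightarrow> bool" where
  "eq_upto M f g \<longleftrightarrow> (\<forall>i<M. f $ i = g $ i)"

lemma eq_upto_refl [simp]: "eq_upto M f f"
  by (simp add: eq_upto_def)

lemma eq_upto_sym: "eq_upto M f g \<Longrightarrow> eq_upto M g f"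
  by (simp add: eq_upto_def)

lemma eq_upto_trans [trans]: "eq_upto M f g \<Longrightarrow> eq_upto M g h \<Longrightarrow> eq_upto M f h"
  by (simp add: eq_upto_def)

lemma eq_upto_mult: "eq_upto M f f' \<Longrightarrow> eq_upto M g g' \<Longrightarrow> eq_upto M (f * g) (f' * g')"
  unfolding eq_upto_def fps_mult_nth by (auto intro!: sum.cong)

lemma eq_upto_power: "eq_upto M f g \<Longrightarrow> eq_upto M (f ^ k) (g ^ k)"
  by (induction k) (auto intro: eq_upto_mult)

lemma eq_upto_sum:
  "(\<And>k. k \<in> A \<Longrightarrow> eq_upto M (f k) (g k)) \<Longrightarrow> eq_upto M (sum f A) (sum g A)"
  unfolding eq_upto_def fps_sum_nth by auto

lemma eq_upto_X_power_mult: "M \<le> k \<Longrightarrow> eq_upto M (fps_X ^ k * f) 0"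
  by (simp add: eq_upto_def fps_X_power_mult_nth)

lemma eq_upto_one_minus_X_power: "M \<le> k \<Longrightarrow> eq_upto M (1 - fps_X ^ k) 1"
  by (simp add: eq_upto_def)

text \<open>A series with constant term \<open>1\<close> is invertible, so it can be cancelled.\<close>

lemma eq_upto_cancel:
  assumes "eq_upto M (f * u) (g * u)" "u $ 0 = 1"
  shows "eq_upto M f g"
proof -
  define h where "h = f - g"
  have hu: "(h * u) $ i = 0" if "i < M" for i
    using assms(1) that unfolding eq_upto_def h_def by (simp add: algebra_simps)
  have "h $ i = 0" if "i < M" for i
    using that
  proof (induction i rule: less_induct)
    case (less i)
    have "(h * u) $ i = (\<Sum>j=0..i. h $ j * u $ (i - j))" by (simp add: fps_mult_nth)
    also have "\<dots> = h $ i * u $ 0 + (\<Sum>j\<in>{0..i} - {i}. h $ j * u $ (i - j))"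
      by (subst sum.remove[of "{0..i}" i]) auto
    also have "(\<Sum>j\<in>{0..i} - {i}. h $ j * u $ (i - j)) = 0"
      using less by (intro sum.neutral) auto
    finally show ?case using hu[OF less.prems] assms(2) by simp
  qed
  then show ?thesis unfolding eq_upto_def h_def by simp
qed

text \<open>Factors \<open>1 - q\<^bsup>e k\<^esup>\<close> with \<open>e k \<ge> k\<close> do not affect coefficients below \<open>k\<close>.\<close>

lemma qprod_nth_0: "(\<And>k. k \<le> e k) \<Longrightarrow> qprod e K $ 0 = 1"
proof (induction K)
  case (Suc K)
  have "0 < e (Suc K)" using Suc.prems[of "Suc K"] by simp
  then show ?case using Suc by simp
qed simp

lemma qprod_stable:
  assumes "\<And>k. k \<le> e k" "M \<le> K"
  shows "eq_upto M (qprod e K) (qprod e M)"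
  using assms(2)
proof (induction K)
  case (Suc K)
  show ?case
  proof (cases "M \<le> K")
    case True
    have "M \<le> e (Suc K)" using True assms(1)[of "Suc K"] by simp
    then have "eq_upto M (qprod e K * (1 - fps_X ^ e (Suc K))) (qprod e M * 1)"
      using Suc True by (intro eq_upto_mult eq_upto_one_minus_X_power)
    then show ?thesis by simp
  next
    case False
    with Suc.prems show ?thesis by (simp add: le_Suc_eq)
  qed
qed simp

lemma poch_stable: "M \<le> K \<Longrightarrow> eq_upto M (poch K) (poch M)"
  unfolding poch_def by (rule qprod_stable) simp_all

lemma poch_even_stable: "M \<le> K \<Longrightarrow> eq_upto M (poch_even K) (poch_even M)"
  unfolding poch_even_def by (rule qprod_stable) simp_all

lemma poch_odd_stable: "M \<le> K \<Longrightarrow> eq_upto M (poch_odd K) (poch_odd M)"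
  unfolding poch_odd_def by (rule qprod_stable) simp_all

lemma poch_nth_0 [simp]: "poch K $ 0 = 1" "poch_even K $ 0 = 1"
  unfolding poch_def poch_even_def by (rule qprod_nth_0, simp)+

fun gauss_binom :: "nat \<Rightarrow> nat \<Rightarrow> int fps" where
  "gauss_binom n 0 = 1"
| "gauss_binom 0 (Suc k) = 0"
| "gauss_binom (Suc n) (Suc k) = gauss_binom n k + fps_X ^ (2 * Suc k) * gauss_binom n (Suc k)"

lemma gauss_binom_eq_0: "n < k \<Longrightarrow> gauss_binom n k = 0"
  by (induction n k rule: gauss_binom.induct) auto

lemma gauss_binom_product:
  "k \<le> n \<Longrightarrow> gauss_binom n k * poch_even k * poch_even (n - k) = poch_even n"
proof (induction n arbitrary: k)
  case (Suc n k)
  show ?case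
  proof (cases k)
    case (Suc j)
    have j: "j \<le> n" using Suc.prems Suc by simp
    let ?x = "fps_X ^ (2 * Suc j) :: int fps"
    have first: "gauss_binom n j * poch_even (Suc j) * poch_even (n - j) = poch_even n * (1 - ?x)"
    proof -
      have "gauss_binom n j * poch_even (Suc j) * poch_even (n - j) =
            (gauss_binom n j * poch_even j * poch_even (n - j)) * (1 - ?x)"
        by (simp only: poch_simps ac_simps)
      then show ?thesis using Suc.IH[OF j] by simp
    qed
    have second: "?x * gauss_binom n (Suc j) * poch_even (Suc j) * poch_even (n - j) =
                  poch_even n * (?x - fps_X ^ (2 * Suc n))"
    proof (cases "j < n")
      case True
      then have nj: "n - j = Suc (n - Suc j)" by simp
      have e: "?x * fps_X ^ (2 * (n - j)) = fps_X ^ (2 * Suc n)"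
        using True by (simp add: power_add[symmetric])
      have "?x * gauss_binom n (Suc j) * poch_even (Suc j) * poch_even (n - j)
          = ?x * (gauss_binom n (Suc j) * poch_even (Suc j) * poch_even (n - Suc j))
              * (1 - fps_X ^ (2 * (n - j)))"
        unfolding nj by (simp only: poch_simps ac_simps)
      also have "\<dots> = poch_even n * (?x - ?x * fps_X ^ (2 * (n - j)))"
        using Suc.IH[of "Suc j"] True by (simp add: algebra_simps)
      finally show ?thesis unfolding e .
    next
      case False
      then show ?thesis using j by (simp add: gauss_binom_eq_0)
    qed
    have "gauss_binom (Suc n) k * poch_even k * poch_even (Suc n - k) =
          gauss_binom n j * poch_even (Suc j) * poch_even (n - j)
          + ?x * gauss_binom n (Suc j) * poch_even (Suc j) * poch_even (n - j)"
      using Suc by (simp add: algebra_simps)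
    also have "\<dots> = poch_even (Suc n)" unfolding first second by (simp add: algebra_simps)
    finally show ?thesis .
  qed simp
qed simp

lemma poch_even_nonzero: "poch_even K \<noteq> 0"
  using poch_nth_0(2)[of K] by (metis fps_zero_nth zero_neq_one)

lemma gauss_binom_symmetric:
  assumes "k \<le> n"
  shows "gauss_binom n (n - k) = gauss_binom n k"
proof -
  have "gauss_binom n (n - k) * (poch_even k * poch_even (n - k)) =
        gauss_binom n k * (poch_even k * poch_even (n - k))"
    using gauss_binom_product[of k n] gauss_binom_product[of "n - k" n] assms
    by (simp add: ac_simps)
  then show ?thesis using poch_even_nonzero by simp
qed

section \<open>A finite form of Jacobi's triple product\<close>

definition gauss_binom_int :: "nat \<Rightarrow> int \<Rightarrow> int fps" where
  "gauss_binom_int N K = (if K < 0 then 0 else gauss_binom N (nat K))"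

lemma gauss_binom_int_Suc:
  "gauss_binom_int (Suc N) K = gauss_binom_int N (K - 1) + fps_X ^ (2 * nat K) * gauss_binom_int N K"
proof (cases "K \<le> 0")
  case True
  then show ?thesis by (cases "K = 0") (auto simp: gauss_binom_int_def)
next
  case False
  then obtain j where j: "nat K = Suc j" by (metis gr0_implies_Suc zero_less_nat_eq not_le)
  then have "nat (K - 1) = j" by simp
  then show ?thesis using False j by (simp add: gauss_binom_int_def)
qed

lemma gauss_binom_int_eq_0: "K < 0 \<or> int N < K \<Longrightarrow> gauss_binom_int N K = 0"
  by (auto simp: gauss_binom_int_def gauss_binom_eq_0)

definition parity_sign :: "int \<Rightarrow> int fps" where
  "parity_sign k = (if even k then 1 else -1)"

text \<open>It equals \<open>(q;q\<^sup>2)\<^sub>m (q;q\<^sup>2)\<^sub>n\<close>; letting \<open>m = n \<rightarrow> \<infinity>\<close>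
  gives the Jacobi triple product at \<open>z = -1\<close>, i.e. Gauss's identity for
  \<open>\<Sum>(-1)\<^sup>k q\<^bsup>k\<^sup>2\<^esup>\<close>.\<close>

definition triple_product_sum :: "nat \<Rightarrow> nat \<Rightarrow> int fps" where
  "triple_product_sum m n = (\<Sum>k\<in>{-int m..int n}.
     parity_sign k * fps_X ^ nat (k\<^sup>2) * gauss_binom_int (m + n) (int m + k))"

lemma sum_shift_int: "(\<Sum>k\<in>{a..b}. f (k + c)) = (\<Sum>k\<in>{a + c..b + (c::int)}. f k)"
proof -
  have "(\<Sum>k\<in>(\<lambda>k. k + c) ` {a..b}. f k) = (\<Sum>k\<in>{a..b}. f (k + c))"
    by (rule sum.reindex_cong[where l = "\<lambda>k. k + c"]) (auto simp: inj_on_def)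
  then show ?thesis by simp
qed

text \<open>The exponents match up after the index shift \<open>j \<mapsto> j - 1\<close>:
  \<open>(j - 1)\<^sup>2 + 2(m + j) = j\<^sup>2 + 2m + 1\<close>.\<close>

lemma shifted_square_exponent:
  assumes "0 \<le> int m + j"
  shows "nat ((j - 1)\<^sup>2) + 2 * nat (int m + j) = nat (j\<^sup>2) + (2 * m + 1)"
proof -
  have "j * 2 \<le> 1 + j * j"
    using zero_le_power2[of "j - 1"] by (simp add: power2_eq_square algebra_simps)
  then have "int (nat ((j - 1)\<^sup>2) + 2 * nat (int m + j)) = int (nat (j\<^sup>2) + (2 * m + 1))"
    using assms by (simp add: power2_eq_square algebra_simps)
  then show ?thesis by (simp only: of_nat_eq_iff)
qed

text \<open>Pascal's rule for the Gaussian binomials splits \<open>triple_product_sum (m + 1) n\<close> into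
  \<open>triple_product_sum m n\<close> and a shifted copy of it, which equals \<open>-q\<^bsup>2m+1\<^esup>\<close> times
  \<open>triple_product_sum m n\<close>.\<close>

lemma triple_product_sum_Suc_left:
  "triple_product_sum (Suc m) n = (1 - fps_X ^ (2 * m + 1)) * triple_product_sum m n"
proof -
  define N where "N = m + n"
  define f where "f j = parity_sign (j - 1) * fps_X ^ nat ((j - 1)\<^sup>2) *
    (fps_X ^ (2 * nat (int m + j)) * gauss_binom_int N (int m + j))" for j
  have "triple_product_sum (Suc m) n = (\<Sum>k\<in>{- 1 - int m..int n}.
      parity_sign k * fps_X ^ nat (k\<^sup>2) * gauss_binom_int (Suc N) (int m + 1 + k))"
    unfolding triple_product_sum_def N_def by (simp add: add_ac)
  also have "\<dots> = (\<Sum>k\<in>{- 1 - int m..int n}.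
                    parity_sign k * fps_X ^ nat (k\<^sup>2) * gauss_binom_int N (int m + k))
                 + (\<Sum>k\<in>{- 1 - int m..int n}. f (k + 1))"
    unfolding gauss_binom_int_Suc f_def by (simp add: algebra_simps sum.distrib)
  also have "(\<Sum>k\<in>{- 1 - int m..int n}.
      parity_sign k * fps_X ^ nat (k\<^sup>2) * gauss_binom_int N (int m + k)) = triple_product_sum m n"
  proof -
    have "{- 1 - int m..int n} = insert (- 1 - int m) {-int m..int n}" by auto
    then show ?thesis unfolding triple_product_sum_def N_def by (simp add: gauss_binom_int_eq_0)
  qed
  also have "(\<Sum>k\<in>{- 1 - int m..int n}. f (k + 1)) = (\<Sum>k\<in>{-int m..int n + 1}. f k)"
    by (simp add: sum_shift_int)
  also have "\<dots> = (\<Sum>k\<in>{-int m..int n}. f k)"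
  proof -
    have "{-int m..int n + 1} = insert (int n + 1) {-int m..int n}" by auto
    moreover have "f (int n + 1) = 0" unfolding f_def N_def by (simp add: gauss_binom_int_eq_0)
    ultimately show ?thesis by simp
  qed
  also have "\<dots> = - (fps_X ^ (2 * m + 1) * triple_product_sum m n)"
    unfolding triple_product_sum_def N_def sum_distrib_left sum_negf[symmetric]
  proof (rule sum.cong)
    fix j assume j: "j \<in> {-int m..int n}"
    have "f j = - parity_sign j * (fps_X ^ nat ((j - 1)\<^sup>2) * fps_X ^ (2 * nat (int m + j)))
                * gauss_binom_int (m + n) (int m + j)"
      unfolding f_def N_def by (simp add: parity_sign_def ac_simps)
    also have "\<dots> = - parity_sign j * (fps_X ^ nat (j\<^sup>2) * fps_X ^ (2 * m + 1))
                     * gauss_binom_int (m + n) (int m + j)"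
    proof -
      have "nat ((j - 1)\<^sup>2) + 2 * nat (int m + j) = nat (j\<^sup>2) + (2 * m + 1)"
        using j by (intro shifted_square_exponent) simp
      then show ?thesis by (simp only: power_add[symmetric])
    qed
    finally show "f j = - (fps_X ^ (2 * m + 1) *
        (parity_sign j * fps_X ^ nat (j\<^sup>2) * gauss_binom_int (m + n) (int m + j)))"
      by (simp add: ac_simps)
  qed simp
  finally show ?thesis by (simp add: algebra_simps)
qed

text \<open>The symmetry \<open>[n choose k] = [n choose n-k]\<close> lets us swap the two indices.\<close>

lemma triple_product_sum_swap: "triple_product_sum 0 n = triple_product_sum n 0"
proof -
  have "triple_product_sum n 0 = (\<Sum>k\<in>uminus ` {0..int n}.
      parity_sign k * fps_X ^ nat (k\<^sup>2) * gauss_binom_int n (int n + k))"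
    unfolding triple_product_sum_def by simp
  also have "\<dots> = (\<Sum>k\<in>{0..int n}.
      parity_sign (-k) * fps_X ^ nat ((-k)\<^sup>2) * gauss_binom_int n (int n - k))"
    by (subst sum.reindex) (auto simp: inj_on_def)
  also have "\<dots> = (\<Sum>k\<in>{0..int n}. parity_sign k * fps_X ^ nat (k\<^sup>2) * gauss_binom_int n k)"
  proof (rule sum.cong)
    fix k assume k: "k \<in> {0..int n}"
    have "gauss_binom_int n (int n - k) = gauss_binom n (n - nat k)"
      using k by (simp add: gauss_binom_int_def nat_diff_distrib)
    also have "\<dots> = gauss_binom n (nat k)" using k by (intro gauss_binom_symmetric) auto
    also have "\<dots> = gauss_binom_int n k" using k by (simp add: gauss_binom_int_def)
    finally show "parity_sign (-k) * fps_X ^ nat ((-k)\<^sup>2) * gauss_binom_int n (int n - k) =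
                  parity_sign k * fps_X ^ nat (k\<^sup>2) * gauss_binom_int n k"
      by (simp add: parity_sign_def)
  qed simp
  also have "\<dots> = triple_product_sum 0 n" unfolding triple_product_sum_def by simp
  finally show ?thesis by simp
qed

lemma triple_product_sum_right_0: "triple_product_sum m 0 = poch_odd m"
proof (induction m)
  case 0 then show ?case by (simp add: triple_product_sum_def gauss_binom_int_def parity_sign_def)
next
  case (Suc m) then show ?case by (simp add: triple_product_sum_Suc_left ac_simps)
qed

theorem finite_jacobi_triple_product: "triple_product_sum m n = poch_odd m * poch_odd n"
proof (induction m)
  case 0 then show ?case using triple_product_sum_swap triple_product_sum_right_0 by simp
next
  case (Suc m) then show ?case by (simp add: triple_product_sum_Suc_left ac_simps)
qed

section \<open>Gauss's identity: the reciprocal of the overpartition series\<close>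

text \<open>\<open>theta = \<Sum>k\<in>\<int>. (-1)\<^sup>k q\<^bsup>k\<^sup>2\<^esup>\<close>, written coefficientwise.\<close>

definition theta :: "int fps" where
  "theta = Abs_fps (\<lambda>i. (-1) ^ i * int (card {k::int. k\<^sup>2 = int i}))"

lemma abs_le_square: "\<bar>k::int\<bar> \<le> k\<^sup>2"
proof (cases "k = 0")
  case False
  then have "\<bar>k\<bar> * 1 \<le> \<bar>k\<bar> * \<bar>k\<bar>" by (intro mult_left_mono) auto
  then show ?thesis by (simp add: power2_eq_square abs_mult_self_eq)
qed simp

text \<open>The central Gaussian binomials tend to \<open>1/(q\<^sup>2;q\<^sup>2)\<^sub>\<infinity>\<close>: below degree \<open>M\<close> they agree
  with \<open>1/(q\<^sup>2;q\<^sup>2)\<^sub>M\<close> once \<open>n\<close> is large and \<open>k\<close> small.\<close>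

lemma central_gauss_binom_approx:
  assumes "k\<^sup>2 < int M" "2 * M \<le> n"
  shows "eq_upto M (gauss_binom_int (2 * n) (int n + k) * poch_even M) 1"
proof -
  have "\<bar>k\<bar> < int M" using abs_le_square[of k] assms(1) by linarith
  define a where "a = nat (int n + k)"
  define b where "b = nat (int n - k)"
  have aM: "M \<le> a" and bM: "M \<le> b" and ab: "2 * n - a = b" and a2n: "a \<le> 2 * n"
    using \<open>\<bar>k\<bar> < int M\<close> assms(2) unfolding a_def b_def by auto
  have binom: "gauss_binom_int (2 * n) (int n + k) = gauss_binom (2 * n) a"
    using \<open>\<bar>k\<bar> < int M\<close> assms(2) unfolding a_def gauss_binom_int_def by auto
  have "gauss_binom (2 * n) a * poch_even a * poch_even b = poch_even (2 * n)"
    using gauss_binom_product[OF a2n] by (simp only: ab)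
  moreover have "eq_upto M (gauss_binom (2 * n) a * poch_even a * poch_even b)
                           (gauss_binom (2 * n) a * poch_even M * poch_even M)"
    by (intro eq_upto_mult eq_upto_refl poch_even_stable aM bM)
  moreover have "eq_upto M (poch_even (2 * n)) (poch_even M)"
    using assms(2) by (intro poch_even_stable) simp
  ultimately have "eq_upto M ((gauss_binom (2 * n) a * poch_even M) * poch_even M) (1 * poch_even M)"
    by (metis eq_upto_sym eq_upto_trans mult_1)
  then have "eq_upto M (gauss_binom (2 * n) a * poch_even M) 1"
    by (rule eq_upto_cancel) simp
  then show ?thesis using binom by simp
qed

lemma fps_nth_X_power_parity_sign:
  "(fps_X ^ a * parity_sign k) $ i = (if i = a then (if even k then 1 else -1) else 0)"
  by (simp add: parity_sign_def fps_X_power_mult_nth)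

lemma triple_product_sum_approx_theta:
  assumes "2 * M \<le> n"
  shows "eq_upto M (triple_product_sum n n * poch_even M) theta"
proof -
  define I where "I = {-int n..int n}"
  have expand: "triple_product_sum n n * poch_even M = (\<Sum>k\<in>I.
      fps_X ^ nat (k\<^sup>2) * (parity_sign k * (gauss_binom_int (2 * n) (int n + k) * poch_even M)))"
    unfolding triple_product_sum_def I_def sum_distrib_right mult_2 by (simp add: ac_simps)
  have "eq_upto M (\<Sum>k\<in>I.
      fps_X ^ nat (k\<^sup>2) * (parity_sign k * (gauss_binom_int (2 * n) (int n + k) * poch_even M)))
      (\<Sum>k\<in>I. if k\<^sup>2 < int M then fps_X ^ nat (k\<^sup>2) * parity_sign k else 0)"
  proof (rule eq_upto_sum)
    fix k assume "k \<in> I"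
    show "eq_upto M
      (fps_X ^ nat (k\<^sup>2) * (parity_sign k * (gauss_binom_int (2 * n) (int n + k) * poch_even M)))
      (if k\<^sup>2 < int M then fps_X ^ nat (k\<^sup>2) * parity_sign k else 0)"
    proof (cases "k\<^sup>2 < int M")
      case True
      then have "eq_upto M
          (fps_X ^ nat (k\<^sup>2) * (parity_sign k * (gauss_binom_int (2 * n) (int n + k) * poch_even M)))
          (fps_X ^ nat (k\<^sup>2) * (parity_sign k * 1))"
        using central_gauss_binom_approx[OF True assms] by (intro eq_upto_mult eq_upto_refl)
      then show ?thesis using True by simp
    qed (simp add: eq_upto_X_power_mult)
  qed
  moreover have "eq_upto M (\<Sum>k\<in>I. if k\<^sup>2 < int M then fps_X ^ nat (k\<^sup>2) * parity_sign k else 0) theta"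
    unfolding eq_upto_def
  proof (intro allI impI)
    fix i assume iM: "i < M"
    have "k \<in> I" if "k\<^sup>2 = int i" for k
      using abs_le_square[of k] that iM assms unfolding I_def by auto
    then have squares_in_I: "{k \<in> I. k\<^sup>2 = int i} = {k. k\<^sup>2 = int i}" by auto
    have "(\<Sum>k\<in>I. if k\<^sup>2 < int M then fps_X ^ nat (k\<^sup>2) * parity_sign k else 0) $ i
        = (\<Sum>k\<in>I. if k\<^sup>2 = int i then (if even k then 1 else -1) else 0)"
      unfolding fps_sum_nth using iM by (intro sum.cong) (auto simp: fps_nth_X_power_parity_sign)
    also have "\<dots> = (\<Sum>k\<in>{k\<in>I. k\<^sup>2 = int i}. (if even k then 1 else -1))"
      by (subst sum.inter_filter) (auto simp: I_def)
    also have "\<dots> = (\<Sum>k\<in>{k\<in>I. k\<^sup>2 = int i}. (-1) ^ i)"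
    proof (rule sum.cong)
      fix k assume "k \<in> {k\<in>I. k\<^sup>2 = int i}"
      then have "even k \<longleftrightarrow> even i"
        by (metis (mono_tags, lifting) even_of_nat even_power mem_Collect_eq zero_less_numeral)
      then show "(if even k then 1 else -1) = ((-1) ^ i :: int)" by simp
    qed simp
    also have "\<dots> = theta $ i"
      by (simp add: theta_def squares_in_I)
    finally show "(\<Sum>k\<in>I. if k\<^sup>2 < int M then fps_X ^ nat (k\<^sup>2) * parity_sign k else 0) $ i
                  = theta $ i" .
  qed
  ultimately show ?thesis unfolding expand by (rule eq_upto_trans)
qed

text \<open>Coefficient \<open>i\<close> is checked below
  degree \<open>M = i + 1\<close>, where everything reduces to the finite product identities above.\<close>

theorem theta_times_overpartition_fps: "theta * overpartition_fps = 1"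
proof (rule fps_ext)
  fix i
  define M where "M = Suc i"
  let ?C = "bounded_overpartition_fps M"
  have theta_approx: "eq_upto M theta (poch_odd M ^ 2 * poch_even M)"
  proof -
    have "eq_upto M theta (triple_product_sum (2 * M) (2 * M) * poch_even M)"
      using triple_product_sum_approx_theta[of M "2 * M"] by (simp add: eq_upto_sym)
    also have "triple_product_sum (2 * M) (2 * M) * poch_even M = poch_odd (2 * M) ^ 2 * poch_even M"
      by (simp add: finite_jacobi_triple_product power2_eq_square)
    also have "eq_upto M \<dots> (poch_odd M ^ 2 * poch_even M)"
      using poch_odd_stable[of M "2 * M"] by (intro eq_upto_mult eq_upto_power eq_upto_refl) simp
    finally show ?thesis .
  qed
  have "theta * ?C * poch M ^ 2 = theta * poch_even M"
    by (simp only: mult.assoc bounded_overpartition_fps_product)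
  also have "eq_upto M \<dots> (poch_odd M ^ 2 * poch_even M * poch_even M)"
    using theta_approx by (intro eq_upto_mult eq_upto_refl)
  also have "poch_odd M ^ 2 * poch_even M * poch_even M = poch (2 * M) ^ 2"
    unfolding poch_double power2_eq_square by (simp only: ac_simps)
  also have "eq_upto M \<dots> (1 * poch M ^ 2)"
    using poch_stable[of M "2 * M"] by (simp add: eq_upto_power)
  finally have "eq_upto M (theta * ?C) 1"
    by (rule eq_upto_cancel) (simp add: fps_nth_power_0)
  moreover have "eq_upto M (theta * overpartition_fps) (theta * ?C)"
    by (intro eq_upto_mult eq_upto_refl) (simp add: eq_upto_def overpartition_fps_nth_bounded M_def)
  ultimately show "(theta * overpartition_fps) $ i = 1 $ i"
    unfolding eq_upto_def M_def by (metis lessI)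
qed

section \<open>Congruences of power series and the Frobenius map\<close>

definition fps_cong :: "int fps \<Rightarrow> int fps \<Rightarrow> int \<Rightarrow> bool" where
  "fps_cong f g m \<longleftrightarrow> (\<forall>n. [f $ n = g $ n] (mod m))"

lemma fps_cong_refl [simp]: "fps_cong f f m"
  by (simp add: fps_cong_def)

lemma fps_cong_trans: "fps_cong f g m \<Longrightarrow> fps_cong g h m \<Longrightarrow> fps_cong f h m"
  unfolding fps_cong_def by (metis cong_trans)

lemma fps_cong_add: "fps_cong f f' m \<Longrightarrow> fps_cong g g' m \<Longrightarrow> fps_cong (f + g) (f' + g') m"
  by (simp add: fps_cong_def cong_add)

lemma fps_cong_diff: "fps_cong f f' m \<Longrightarrow> fps_cong g g' m \<Longrightarrow> fps_cong (f - g) (f' - g') m"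
  by (simp add: fps_cong_def cong_diff)

lemma fps_cong_mult: "fps_cong f f' m \<Longrightarrow> fps_cong g g' m \<Longrightarrow> fps_cong (f * g) (f' * g') m"
  unfolding fps_cong_def fps_mult_nth by (auto intro!: cong_sum cong_mult)

lemma fps_cong_add_multiple: "fps_cong (f + of_nat m * g) f (int m)"
proof -
  have "(of_nat m * g) $ n = int m * g $ n" for n
    by (simp flip: fps_of_nat)
  then show ?thesis by (simp add: fps_cong_def cong_iff_dvd_diff)
qed

text \<open>The "freshman's dream": in any commutative ring, \<open>(a + b)\<^sup>p \<equiv> a\<^sup>p + b\<^sup>p\<close> modulo a
  prime \<open>p\<close>, because \<open>p\<close> divides the inner binomial coefficients.\<close>

lemma binomial_prime_power:
  fixes a b :: "'a::comm_ring_1"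
  assumes "prime p"
  shows "\<exists>r. (a + b) ^ p = a ^ p + b ^ p + of_nat p * r"
proof -
  have p: "0 < p" using assms prime_gt_0_nat by blast
  let ?t = "\<lambda>k. of_nat (p choose k) * a ^ k * b ^ (p - k)"
  have "(a + b) ^ p = (\<Sum>k\<le>p. ?t k)" by (rule binomial_ring)
  also have "{..p} = insert 0 (insert p {1..<p})" using p by auto
  also have "(\<Sum>k\<in>insert 0 (insert p {1..<p}). ?t k) = b ^ p + a ^ p + (\<Sum>k\<in>{1..<p}. ?t k)"
    using p by (simp add: add.assoc)
  also have "(\<Sum>k\<in>{1..<p}. ?t k) =
             of_nat p * (\<Sum>k\<in>{1..<p}. of_nat ((p choose k) div p) * a ^ k * b ^ (p - k))"
    unfolding sum_distrib_left
  proof (rule sum.cong)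
    fix k assume "k \<in> {1..<p}"
    then have "p dvd (p choose k)" using assms by (intro dvd_choose_prime) auto
    then have "of_nat (p choose k) = (of_nat p * of_nat ((p choose k) div p) :: 'a)"
      by (simp flip: of_nat_mult)
    then show "?t k = of_nat p * (of_nat ((p choose k) div p) * a ^ k * b ^ (p - k))"
      by (simp add: mult.assoc)
  qed simp
  finally show ?thesis by (auto simp: add_ac)
qed

text \<open>Fermat's little theorem for integers, by induction from the freshman's dream.\<close>

lemma fermat_little_int:
  assumes "prime p"
  shows "[c ^ p = c] (mod int p)"
proof -
  have p: "0 < p" using assms prime_gt_0_nat by blast
  have nonneg: "[int k ^ p = int k] (mod int p)" for k
  proof (induction k)
    case 0
    then show ?case using p by (simp add: zero_power)
  next
    case (Suc k)
    obtain r where "(int k + 1) ^ p = int k ^ p + 1 ^ p + of_nat p * r"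
      using binomial_prime_power[OF assms] by blast
    then have "[(int k + 1) ^ p = int k ^ p + 1] (mod int p)"
      by (simp add: cong_iff_dvd_diff)
    also have "[int k ^ p + 1 = int k + 1] (mod int p)"
      using Suc by (intro cong_add cong_refl)
    finally show ?case by (simp add: add.commute)
  qed
  have "[c ^ p = (c mod int p) ^ p] (mod int p)"
    by (simp add: cong_def power_mod)
  also have "c mod int p = int (nat (c mod int p))"
    using p by simp
  also have "[int (nat (c mod int p)) ^ p = int (nat (c mod int p))] (mod int p)"
    by (rule nonneg)
  also have "int (nat (c mod int p)) = c mod int p"
    using p by simp
  also have "[c mod int p = c] (mod int p)"
    by (simp add: cong_def)
  finally show ?thesis .
qed

definition fps_dilate :: "nat \<Rightarrow> int fps \<Rightarrow> int fps" where
  "fps_dilate p f = f oo fps_X ^ p"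

lemma fps_dilate_nth: "fps_dilate p f $ n = (if p dvd n then f $ (n div p) else 0)"
  unfolding fps_dilate_def by (rule fps_nth_compose_X_power)

lemma fps_dilate_mult: "0 < p \<Longrightarrow> fps_dilate p (f * g) = fps_dilate p f * fps_dilate p g"
  unfolding fps_dilate_def by (rule fps_compose_mult_distrib) simp

lemma fps_dilate_add: "fps_dilate p (f + g) = fps_dilate p f + fps_dilate p g"
  unfolding fps_dilate_def by (rule fps_compose_add_distrib)

lemma fps_dilate_1 [simp]: "fps_dilate p 1 = 1"
  unfolding fps_dilate_def by simp

lemma fps_cutoff_Suc:
  "fps_cutoff (Suc N) f = fps_cutoff N f + fps_const (f $ N) * fps_X ^ N"
  by (auto simp: fps_eq_iff less_Suc_eq)

text \<open>The Frobenius congruence \<open>f(q)\<^sup>p \<equiv> f(q\<^sup>p) (mod p)\<close> for integer power series: true for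
  monomials by Fermat, and additive by the freshman's dream; a coefficient of \<open>f\<^sup>p\<close> or of
  \<open>f(q\<^sup>p)\<close> only depends on a polynomial truncation of \<open>f\<close>.\<close>

lemma frobenius_monomial:
  assumes "prime p"
  shows "fps_cong ((fps_const c * fps_X ^ N) ^ p) (fps_dilate p (fps_const c * fps_X ^ N)) (int p)"
  unfolding fps_cong_def
proof
  fix n
  have p: "0 < p" using assms prime_gt_0_nat by blast
  have monomial_power: "(fps_const c * fps_X ^ N) ^ p = fps_const (c ^ p) * fps_X ^ (p * N)"
    by (simp only: power_mult_distrib fps_const_power power_mult[symmetric] mult.commute)
  have lhs: "((fps_const c * fps_X ^ N) ^ p) $ n = (if n = p * N then c ^ p else 0)"
    unfolding monomial_power by simp
  have rhs: "fps_dilate p (fps_const c * fps_X ^ N) $ n = (if n = p * N then c else 0)"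
    using p by (auto simp: fps_dilate_nth)
  show "[((fps_const c * fps_X ^ N) ^ p) $ n = fps_dilate p (fps_const c * fps_X ^ N) $ n] (mod int p)"
    unfolding lhs rhs using fermat_little_int[OF assms] by simp
qed

lemma frobenius_polynomial:
  assumes "prime p"
  shows "fps_cong (fps_cutoff N f ^ p) (fps_dilate p (fps_cutoff N f)) (int p)"
proof (induction N)
  case 0
  have "0 < p" using assms prime_gt_0_nat by blast
  then show ?case by (simp add: fps_dilate_def zero_power)
next
  case (Suc N)
  define a where "a = fps_cutoff N f"
  define b where "b = fps_const (f $ N) * fps_X ^ N"
  obtain r where "(a + b) ^ p = a ^ p + b ^ p + of_nat p * r"
    using binomial_prime_power[OF assms] by blast
  then have "fps_cong ((a + b) ^ p) (a ^ p + b ^ p) (int p)"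
    using fps_cong_add_multiple by simp
  moreover have "fps_cong (a ^ p + b ^ p) (fps_dilate p a + fps_dilate p b) (int p)"
    using Suc frobenius_monomial[OF assms] unfolding a_def b_def by (intro fps_cong_add)
  ultimately have "fps_cong ((a + b) ^ p) (fps_dilate p (a + b)) (int p)"
    by (simp add: fps_dilate_add fps_cong_trans)
  then show ?case by (simp add: fps_cutoff_Suc a_def b_def)
qed

theorem frobenius_congruence:
  assumes "prime p"
  shows "fps_cong (f ^ p) (fps_dilate p f) (int p)"
  unfolding fps_cong_def
proof
  fix n
  have p: "0 < p" using assms prime_gt_0_nat by blast
  define N where "N = Suc n"
  have "eq_upto N f (fps_cutoff N f)" by (simp add: eq_upto_def)
  then have "(f ^ p) $ n = (fps_cutoff N f ^ p) $ n"
    unfolding N_def by (metis eq_upto_def eq_upto_power lessI)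
  moreover have "fps_dilate p f $ n = fps_dilate p (fps_cutoff N f) $ n"
    using p by (simp add: fps_dilate_nth N_def) (metis div_le_dividend le_imp_less_Suc)
  ultimately show "[(f ^ p) $ n = fps_dilate p f $ n] (mod int p)"
    using frobenius_polynomial[OF assms, of N f] by (simp add: fps_cong_def)
qed

text \<open>Combined with Gauss's identity: \<open>P \<equiv> theta\<^bsup>p-1\<^esup> \<cdot> P(q\<^sup>p) (mod p)\<close> for the
  overpartition series \<open>P\<close>, since \<open>theta \<cdot> P = 1\<close> and \<open>theta\<^sup>p \<equiv> theta(q\<^sup>p)\<close>.\<close>

theorem overpartition_fps_cong:
  assumes "prime p"
  shows "fps_cong overpartition_fps (theta ^ (p - 1) * fps_dilate p overpartition_fps) (int p)"
proof -
  let ?P = overpartition_fps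
  have p: "0 < p" using assms prime_gt_0_nat by blast
  define D where "D = theta ^ (p - 1) * fps_dilate p ?P - ?P"
  have "theta * D = theta ^ p * fps_dilate p ?P - 1"
    unfolding D_def right_diff_distrib theta_times_overpartition_fps mult.assoc[symmetric]
    using p by (simp flip: power_Suc)
  also have "fps_cong (theta ^ p * fps_dilate p ?P - 1)
                      (fps_dilate p theta * fps_dilate p ?P - 1) (int p)"
    by (intro fps_cong_diff fps_cong_mult frobenius_congruence[OF assms] fps_cong_refl)
  also have "fps_dilate p theta * fps_dilate p ?P - 1 = 0"
    using p by (simp flip: fps_dilate_mult add: theta_times_overpartition_fps)
  finally have "fps_cong (?P * (theta * D)) (?P * 0) (int p)"
    by (intro fps_cong_mult fps_cong_refl)
  moreover have "?P * (theta * D) = D"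
    using theta_times_overpartition_fps by (simp add: ac_simps)
  ultimately have "fps_cong D 0 (int p)" by simp
  then show ?thesis unfolding D_def fps_cong_def by (simp add: cong_iff_dvd_diff dvd_diff_commute)
qed

definition fps_section :: "nat \<Rightarrow> int fps \<Rightarrow> int fps" where
  "fps_section p f = Abs_fps (\<lambda>n. f $ (p * n))"

lemma fps_section_dilate_nth:
  assumes "0 < p"
  shows "(U * fps_dilate p g) $ (p * n) = (fps_section p U * g) $ n"
proof -
  define W where "W = U - fps_dilate p (fps_section p U)"
  have W: "W $ i = 0" if "p dvd i" for i
    using that unfolding W_def fps_section_def by (auto simp: fps_dilate_nth)
  have "(W * fps_dilate p g) $ (p * n) = 0"
    unfolding fps_mult_nth
  proof (intro sum.neutral ballI)
    fix i assume i: "i \<in> {0..p * n}"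
    show "W $ i * fps_dilate p g $ (p * n - i) = 0"
    proof (cases "p dvd i")
      case False
      then have "\<not> p dvd (p * n - i)"
        using i by (metis atLeastAtMost_iff diff_diff_cancel dvd_diff_nat dvd_triv_left)
      then show ?thesis by (simp add: fps_dilate_nth)
    qed (simp add: W)
  qed
  moreover have "U * fps_dilate p g = fps_dilate p (fps_section p U * g) + W * fps_dilate p g"
    unfolding W_def using assms by (simp add: fps_dilate_mult algebra_simps)
  ultimately show ?thesis using assms by (simp add: fps_dilate_nth)
qed

theorem overpartition_section_cong:
  assumes "prime p"
    and section_cong: "fps_cong (fps_section p (theta ^ (p - 1))) (theta ^ (p - 1)) (int p)"
  shows "[overpartition_fps $ (p * n) = (theta ^ (p - 2)) $ n] (mod int p)"
proof -
  let ?P = overpartition_fps and ?U = "theta ^ (p - 1)"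
  have p: "2 \<le> p" using assms(1) prime_ge_2_nat by blast
  have "[?P $ (p * n) = (?U * fps_dilate p ?P) $ (p * n)] (mod int p)"
    using overpartition_fps_cong[OF assms(1)] by (simp add: fps_cong_def)
  also have "(?U * fps_dilate p ?P) $ (p * n) = (fps_section p ?U * ?P) $ n"
    using p by (simp add: fps_section_dilate_nth)
  also have "[(fps_section p ?U * ?P) $ n = (?U * ?P) $ n] (mod int p)"
    using fps_cong_mult[OF section_cong fps_cong_refl] by (simp add: fps_cong_def)
  also have "?U * ?P = theta ^ (p - 2)"
  proof -
    have "p - 1 = Suc (p - 2)" using p by simp
    then show ?thesis using theta_times_overpartition_fps by (simp add: ac_simps)
  qed
  finally show ?thesis .
qed

section \<open>Powers of theta count representations by sums of squares\<close>

definition weight_fps :: "('a \<Rightarrow> nat) \<Rightarrow> int fps" where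
  "weight_fps w = Abs_fps (\<lambda>n. int (card {x. w x = n}))"

lemma fiber_of_sum:
  "{p. w1 (fst p) + w2 (snd p) = (n::nat)} = (\<Union>i\<in>{0..n}. {x. w1 x = i} \<times> {y. w2 y = n - i})"
  by auto

lemma finite_fiber_of_sum:
  assumes "\<And>i. finite {x. w1 x = (i::nat)}" "\<And>i. finite {y. w2 y = (i::nat)}"
  shows "finite {p. w1 (fst p) + w2 (snd p) = n}"
  unfolding fiber_of_sum using assms by auto

lemma weight_fps_mult:
  assumes "\<And>i. finite {x. w1 x = (i::nat)}" "\<And>i. finite {y. w2 y = (i::nat)}"
  shows "weight_fps (\<lambda>p. w1 (fst p) + w2 (snd p)) = weight_fps w1 * weight_fps w2"
proof (rule fps_ext)
  fix n
  have "card {p. w1 (fst p) + w2 (snd p) = n} =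
        (\<Sum>i\<in>{0..n}. card ({x. w1 x = i} \<times> {y. w2 y = n - i}))"
    unfolding fiber_of_sum by (rule card_UN_disjoint) (use assms in auto)
  then show "weight_fps (\<lambda>p. w1 (fst p) + w2 (snd p)) $ n = (weight_fps w1 * weight_fps w2) $ n"
    by (simp add: weight_fps_def fps_mult_nth card_cartesian_product)
qed

definition fps_alternate :: "int fps \<Rightarrow> int fps" where
  "fps_alternate f = Abs_fps (\<lambda>n. (-1) ^ n * f $ n)"

lemma fps_alternate_mult: "fps_alternate (f * g) = fps_alternate f * fps_alternate g"
proof (rule fps_ext)
  fix n
  have "(fps_alternate f * fps_alternate g) $ n = (\<Sum>i=0..n. (-1) ^ n * (f $ i * g $ (n - i)))"
    unfolding fps_mult_nth fps_alternate_def
  proof (simp, rule sum.cong)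
    fix i assume "i \<in> {0..n}"
    then have "(-1::int) ^ i * (-1) ^ (n - i) = (-1) ^ n" by (simp flip: power_add)
    then show "(-1) ^ i * f $ i * ((-1) ^ (n - i) * g $ (n - i)) = (-1) ^ n * (f $ i * g $ (n - i))"
      by (metis (no_types, lifting) mult.assoc mult.left_commute)
  qed simp
  then show "fps_alternate (f * g) $ n = (fps_alternate f * fps_alternate g) $ n"
    by (simp add: fps_alternate_def fps_mult_nth sum_distrib_left)
qed

definition square_weight :: "int \<Rightarrow> nat" where "square_weight k = nat (k\<^sup>2)"

lemma square_weight_fiber: "{k. square_weight k = i} = {k. k\<^sup>2 = int i}"
  unfolding square_weight_def by auto

lemma finite_square_weight_fiber: "finite {k. square_weight k = i}"
proof (rule finite_subset)
  show "{k. square_weight k = i} \<subseteq> {-int i..int i}"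
  proof
    fix k assume "k \<in> {k. square_weight k = i}"
    then have "\<bar>k\<bar> \<le> int i" using abs_le_square[of k] by (simp add: square_weight_fiber)
    then show "k \<in> {-int i..int i}" by auto
  qed
qed simp

lemma theta_alternate: "theta = fps_alternate (weight_fps square_weight)"
  by (simp add: fps_eq_iff theta_def fps_alternate_def weight_fps_def square_weight_fiber)

definition sos2 :: "int \<times> int \<Rightarrow> nat" where
  "sos2 p = square_weight (fst p) + square_weight (snd p)"
definition sos3 :: "int \<times> int \<times> int \<Rightarrow> nat" where
  "sos3 p = square_weight (fst p) + sos2 (snd p)"
definition sos4 :: "int \<times> int \<times> int \<times> int \<Rightarrow> nat" where
  "sos4 p = square_weight (fst p) + sos3 (snd p)"

lemma finite_sos2_fiber: "finite {x. sos2 x = i}"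
  unfolding sos2_def by (rule finite_fiber_of_sum) (rule finite_square_weight_fiber)+

lemma finite_sos3_fiber: "finite {x. sos3 x = i}"
  unfolding sos3_def
  by (rule finite_fiber_of_sum) (rule finite_square_weight_fiber, rule finite_sos2_fiber)

lemma finite_sos4_fiber: "finite {x. sos4 x = i}"
  unfolding sos4_def
  by (rule finite_fiber_of_sum) (rule finite_square_weight_fiber, rule finite_sos3_fiber)

lemma weight_fps_sos2: "weight_fps sos2 = weight_fps square_weight ^ 2"
  unfolding sos2_def power2_eq_square by (rule weight_fps_mult) (rule finite_square_weight_fiber)+

lemma weight_fps_sos3: "weight_fps sos3 = weight_fps square_weight ^ 3"
  unfolding sos3_def
  by (subst weight_fps_mult) (simp_all add: finite_square_weight_fiber finite_sos2_fiber
      weight_fps_sos2 eval_nat_numeral)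

lemma weight_fps_sos4: "weight_fps sos4 = weight_fps square_weight ^ 4"
  unfolding sos4_def
  by (subst weight_fps_mult) (simp_all add: finite_square_weight_fiber finite_sos3_fiber
      weight_fps_sos3 eval_nat_numeral)

definition reps3 :: "nat \<Rightarrow> (int \<times> int \<times> int) set" where
  "reps3 n = {(a, b, c). a\<^sup>2 + b\<^sup>2 + c\<^sup>2 = int n}"

definition reps4 :: "nat \<Rightarrow> (int \<times> int \<times> int \<times> int) set" where
  "reps4 n = {(a, b, c, d). a\<^sup>2 + b\<^sup>2 + c\<^sup>2 + d\<^sup>2 = int n}"

lemma sos3_fiber: "{x. sos3 x = n} = reps3 n"
proof -
  have "sos3 (a, b, c) = n \<longleftrightarrow> a\<^sup>2 + b\<^sup>2 + c\<^sup>2 = int n" for a b c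
  proof -
    have "int (sos3 (a, b, c)) = a\<^sup>2 + b\<^sup>2 + c\<^sup>2"
      by (simp add: sos3_def sos2_def square_weight_def)
    then show ?thesis by linarith
  qed
  then show ?thesis unfolding reps3_def by auto
qed

lemma sos4_fiber: "{x. sos4 x = n} = reps4 n"
proof -
  have "sos4 (a, b, c, d) = n \<longleftrightarrow> a\<^sup>2 + b\<^sup>2 + c\<^sup>2 + d\<^sup>2 = int n" for a b c d
  proof -
    have "int (sos4 (a, b, c, d)) = a\<^sup>2 + b\<^sup>2 + c\<^sup>2 + d\<^sup>2"
      by (simp add: sos4_def sos3_def sos2_def square_weight_def)
    then show ?thesis by linarith
  qed
  then show ?thesis unfolding reps4_def by auto
qed

lemma finite_reps4: "finite (reps4 n)"
  using finite_sos4_fiber[of n] by (simp add: sos4_fiber)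

lemma theta_power_alternate: "theta ^ k = fps_alternate (weight_fps square_weight ^ k)"
  by (induction k) (simp_all add: theta_alternate fps_alternate_mult,
      simp add: fps_eq_iff fps_alternate_def)

lemma theta_power3_nth: "(theta ^ 3) $ n = (-1) ^ n * int (card (reps3 n))"
  by (simp add: theta_power_alternate fps_alternate_def flip: weight_fps_sos3)
    (simp add: weight_fps_def sos3_fiber)

lemma theta_power4_nth: "(theta ^ 4) $ n = (-1) ^ n * int (card (reps4 n))"
  by (simp add: theta_power_alternate fps_alternate_def flip: weight_fps_sos4)
    (simp add: weight_fps_def sos4_fiber)

section \<open>Sums of four squares: \<open>r\<^sub>4(5n) \<equiv> r\<^sub>4(n) (mod 5)\<close>\<close>

text \<open>Quadruples are quaternions \<open>a + bi + cj + dk\<close>.  Right multiplication by one of the six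
  quaternions \<open>2 \<pm> i, 2 \<pm> j, 2 \<pm> k\<close> of norm \<open>5\<close> maps the representations of \<open>n\<close> injectively
  onto those representations \<open>x\<close> of \<open>5n\<close> whose product with the conjugate factor is divisible
  by \<open>5\<close>.  A residue computation shows that every \<open>x\<close> with \<open>5 | N(x)\<close> has exactly one such
  factor, or all six if \<open>5 | x\<close>; double counting gives \<open>6 r\<^sub>4(n) = r\<^sub>4(5n) + 5 N\<close>.\<close>

type_synonym quat = "int \<times> int \<times> int \<times> int"

fun qnorm :: "quat \<Rightarrow> int" where
  "qnorm (a, b, c, d) = a\<^sup>2 + b\<^sup>2 + c\<^sup>2 + d\<^sup>2"

fun qadd :: "quat \<Rightarrow> quat \<Rightarrow> quat" where
  "qadd (a, b, c, d) (a', b', c', d') = (a + a', b + b', c + c', d + d')"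

fun qscale5 :: "quat \<Rightarrow> quat" where
  "qscale5 (a, b, c, d) = (5 * a, 5 * b, 5 * c, 5 * d)"

fun qmod5 :: "quat \<Rightarrow> quat" where
  "qmod5 (a, b, c, d) = (a mod 5, b mod 5, c mod 5, d mod 5)"

fun qdiv5 :: "quat \<Rightarrow> quat" where
  "qdiv5 (a, b, c, d) = (a div 5, b div 5, c div 5, d div 5)"

fun qdvd5 :: "quat \<Rightarrow> bool" where
  "qdvd5 (a, b, c, d) \<longleftrightarrow> 5 dvd a \<and> 5 dvd b \<and> 5 dvd c \<and> 5 dvd d"

text \<open>\<open>mul_unit u e x = x \<cdot> (2 + e \<cdot> i\<^sub>u)\<close> for the imaginary units \<open>i\<^sub>1 = i, i\<^sub>2 = j, i\<^sub>3 = k\<close>.\<close>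

fun mul_unit :: "nat \<Rightarrow> int \<Rightarrow> quat \<Rightarrow> quat" where
  "mul_unit u e (a, b, c, d) =
     (if u = 1 then (2 * a - e * b, e * a + 2 * b, 2 * c + e * d, 2 * d - e * c)
      else if u = 2 then (2 * a - e * c, 2 * b - e * d, e * a + 2 * c, e * b + 2 * d)
      else (2 * a - e * d, 2 * b + e * c, 2 * c - e * b, e * a + 2 * d))"

definition norm5_factors :: "(nat \<times> int) list" where
  "norm5_factors = [(1, 1), (1, -1), (2, 1), (2, -1), (3, 1), (3, -1)]"

definition divisible_count :: "quat \<Rightarrow> nat" where
  "divisible_count x = length (filter (\<lambda>j. qdvd5 (mul_unit (fst j) (- snd j) x)) norm5_factors)"

lemma divisible_count_residues:
  "\<forall>a\<in>set [0..4]. \<forall>b\<in>set [0..4]. \<forall>c\<in>set [0..4]. \<forall>d\<in>set [0..4].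
     5 dvd qnorm (a, b, c, d) \<and> \<not> qdvd5 (a, b, c, d) \<longrightarrow> divisible_count (a, b, c, d) = 1"
  unfolding divisible_count_def norm5_factors_def by code_simp

lemma qmod5_decomposition: "x = qadd (qmod5 x) (qscale5 (qdiv5 x))"
  by (cases x) simp

lemma mul_unit_qadd: "mul_unit u e (qadd x y) = qadd (mul_unit u e x) (mul_unit u e y)"
  by (cases x; cases y) (simp add: algebra_simps)

lemma mul_unit_qscale5: "mul_unit u e (qscale5 x) = qscale5 (mul_unit u e x)"
  by (cases x) (simp add: algebra_simps)

lemma qdvd5_qadd_qscale5: "qdvd5 (qadd x (qscale5 y)) \<longleftrightarrow> qdvd5 x"
proof -
  have "(5::int) dvd a + 5 * b \<longleftrightarrow> 5 dvd a" for a b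
    by (rule dvd_add_left_iff) simp
  then show ?thesis by (cases x; cases y) (simp only: qscale5.simps qadd.simps qdvd5.simps)
qed

lemma qdvd5_qscale5 [simp]: "qdvd5 (qscale5 x)"
  by (cases x) simp

lemma qdvd5_mul_unit_qmod5: "qdvd5 (mul_unit u e x) \<longleftrightarrow> qdvd5 (mul_unit u e (qmod5 x))"
proof -
  have "mul_unit u e x = qadd (mul_unit u e (qmod5 x)) (qscale5 (mul_unit u e (qdiv5 x)))"
    by (subst qmod5_decomposition[of x]) (simp only: mul_unit_qadd mul_unit_qscale5)
  then show ?thesis by (simp add: qdvd5_qadd_qscale5)
qed

lemma qdvd5_qmod5: "qdvd5 x \<longleftrightarrow> qdvd5 (qmod5 x)"
  by (subst qmod5_decomposition[of x]) (simp only: qdvd5_qadd_qscale5)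

lemma qnorm_qmod5: "5 dvd qnorm x \<longleftrightarrow> 5 dvd qnorm (qmod5 x)"
proof -
  obtain a b c d where x: "x = (a, b, c, d)" by (cases x)
  have "[qnorm x = qnorm (qmod5 x)] (mod 5)"
    unfolding x by simp (intro cong_add cong_pow; simp)
  then show ?thesis by (rule cong_dvd_iff)
qed

lemma qmod5_range:
  assumes "qmod5 x = (a, b, c, d)"
  shows "a \<in> set [0..4] \<and> b \<in> set [0..4] \<and> c \<in> set [0..4] \<and> d \<in> set [0..4]"
proof -
  have "z mod 5 \<in> set [0..4]" for z :: int by simp
  then show ?thesis using assms by (cases x) auto
qed

lemma divisible_count_eq_1:
  assumes "5 dvd qnorm x" "\<not> qdvd5 x"
  shows "divisible_count x = 1"
proof -
  obtain a b c d where m: "qmod5 x = (a, b, c, d)" by (cases "qmod5 x")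
  have "5 dvd qnorm (a, b, c, d)" "\<not> qdvd5 (a, b, c, d)"
    using assms qnorm_qmod5[of x] qdvd5_qmod5[of x] unfolding m by auto
  then have "divisible_count (a, b, c, d) = 1"
    using divisible_count_residues qmod5_range[OF m] by blast
  moreover have "divisible_count x = divisible_count (qmod5 x)"
    unfolding divisible_count_def by (simp add: qdvd5_mul_unit_qmod5[of _ _ x])
  ultimately show ?thesis unfolding m by simp
qed

lemma divisible_count_eq_6: "qdvd5 x \<Longrightarrow> divisible_count x = 6"
proof -
  assume "qdvd5 x"
  then obtain y where "x = qscale5 y" by (cases x) (auto simp: dvd_def)
  then have "qdvd5 (mul_unit u e x)" for u e by (simp add: mul_unit_qscale5)
  then show ?thesis unfolding divisible_count_def norm5_factors_def by simp
qed

lemma card_divisible_factors: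
  "card {j \<in> set norm5_factors. qdvd5 (mul_unit (fst j) (- snd j) x)} = divisible_count x"
proof -
  have "distinct norm5_factors" by (simp add: norm5_factors_def)
  then show ?thesis
    unfolding divisible_count_def by (simp add: distinct_length_filter Int_def conj_commute)
qed

lemma qnorm_mul_unit: "e \<in> {1, -1} \<Longrightarrow> qnorm (mul_unit u e x) = 5 * qnorm x"
  by (cases x) (auto simp: power2_eq_square algebra_simps)

lemma mul_unit_conjugate: "e \<in> {1, -1} \<Longrightarrow> mul_unit u e (mul_unit u (-e) x) = qscale5 x"
  by (cases x) (auto simp: algebra_simps)

lemma qscale5_inj: "qscale5 x = qscale5 y \<Longrightarrow> x = y"
  by (cases x; cases y) auto

lemma qnorm_qscale5: "qnorm (qscale5 x) = 25 * qnorm x"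
  by (cases x) (simp add: power2_eq_square algebra_simps)

lemma reps4_qnorm: "reps4 n = {x. qnorm x = int n}"
  unfolding reps4_def by auto

lemma inj_mul_unit: "e \<in> {1, -1} \<Longrightarrow> inj (mul_unit u e)"
proof (rule injI)
  fix x y assume e: "e \<in> {1, -1}" and eq: "mul_unit u e x = mul_unit u e y"
  have "-e \<in> {1, -1}" using e by auto
  then have "qscale5 x = qscale5 y"
    using mul_unit_conjugate[of "-e" u x] mul_unit_conjugate[of "-e" u y] eq by simp
  then show "x = y" by (rule qscale5_inj)
qed

lemma mul_unit_image:
  assumes e: "e \<in> {1, -1}"
  shows "mul_unit u e ` reps4 n = {x \<in> reps4 (5 * n). qdvd5 (mul_unit u (-e) x)}"
proof (intro set_eqI iffI)
  have e': "-e \<in> {1, -1}" using e by auto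
  fix x assume "x \<in> mul_unit u e ` reps4 n"
  then obtain z where z: "z \<in> reps4 n" "x = mul_unit u e z" by auto
  have "qnorm x = int (5 * n)" using z qnorm_mul_unit[OF e] by (simp add: reps4_qnorm)
  moreover have "mul_unit u (-e) x = qscale5 z" using mul_unit_conjugate[OF e', of u z] z by simp
  ultimately show "x \<in> {x \<in> reps4 (5 * n). qdvd5 (mul_unit u (-e) x)}" by (simp add: reps4_qnorm)
next
  have e': "-e \<in> {1, -1}" using e by auto
  fix x assume x: "x \<in> {x \<in> reps4 (5 * n). qdvd5 (mul_unit u (-e) x)}"
  then obtain z where z: "mul_unit u (-e) x = qscale5 z"
    by (cases "mul_unit u (-e) x") (auto simp: dvd_def)
  have "qscale5 x = mul_unit u e (mul_unit u (-e) x)" using mul_unit_conjugate[OF e] by simp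
  also have "\<dots> = qscale5 (mul_unit u e z)" by (simp add: z mul_unit_qscale5)
  finally have xz: "x = mul_unit u e z" by (rule qscale5_inj)
  have "25 * qnorm z = 5 * qnorm x"
    using qnorm_mul_unit[OF e', of u x] z qnorm_qscale5[of z] by simp
  then have "qnorm z = int n" using x by (simp add: reps4_qnorm)
  then show "x \<in> mul_unit u e ` reps4 n" using xz by (auto simp: reps4_qnorm)
qed

lemma card_mul_unit_image:
  assumes "e \<in> {1, -1}"
  shows "card {x \<in> reps4 (5 * n). qdvd5 (mul_unit u (-e) x)} = card (reps4 n)"
proof -
  have "card (mul_unit u e ` reps4 n) = card (reps4 n)"
    by (rule card_image[OF inj_on_subset[OF inj_mul_unit[OF assms] subset_UNIV]])
  then show ?thesis by (simp add: mul_unit_image[OF assms])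
qed

lemma card_filter_as_sum: "finite A \<Longrightarrow> card {x\<in>A. P x} = (\<Sum>x\<in>A. if P x then 1 else 0)"
  by (simp add: sum.inter_filter[symmetric])

theorem sum_four_squares_cong:
  "[int (card (reps4 (5 * n))) = int (card (reps4 n))] (mod 5)"
proof -
  define S where "S = reps4 (5 * n)"
  define J where "J = set norm5_factors"
  define P where "P j x = qdvd5 (mul_unit (fst j) (- snd j) x)" for j x
  have finS: "finite S" unfolding S_def by (rule finite_reps4)
  have "card J = 6" unfolding J_def norm5_factors_def by simp
  moreover have "snd j \<in> {1, -1}" if "j \<in> J" for j
    using that unfolding J_def norm5_factors_def by auto
  ultimately have "(\<Sum>j\<in>J. card {x\<in>S. P j x}) = 6 * card (reps4 n)"
    unfolding S_def P_def by (simp add: card_mul_unit_image)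
  moreover have "(\<Sum>j\<in>J. card {x\<in>S. P j x}) = (\<Sum>x\<in>S. divisible_count x)"
  proof -
    have "(\<Sum>j\<in>J. card {x\<in>S. P j x}) = (\<Sum>j\<in>J. \<Sum>x\<in>S. if P j x then 1 else 0)"
      using finS by (simp add: card_filter_as_sum)
    also have "\<dots> = (\<Sum>x\<in>S. \<Sum>j\<in>J. if P j x then 1 else 0)" by (rule sum.swap)
    also have "\<dots> = (\<Sum>x\<in>S. card {j\<in>J. P j x})" by (simp add: card_filter_as_sum J_def)
    finally show ?thesis unfolding J_def P_def by (simp add: card_divisible_factors)
  qed
  moreover have "(\<Sum>x\<in>S. divisible_count x) = (\<Sum>x\<in>S. 1 + 5 * (if qdvd5 x then 1 else 0))"
  proof (rule sum.cong)
    fix x assume "x \<in> S"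
    then have "5 dvd qnorm x" unfolding S_def reps4_qnorm by simp
    then show "divisible_count x = 1 + 5 * (if qdvd5 x then 1 else 0)"
      using divisible_count_eq_1 divisible_count_eq_6 by auto
  qed simp
  moreover have "(\<Sum>x\<in>S. 1 + 5 * (if qdvd5 x then 1 else 0)) = card S + 5 * card {x\<in>S. qdvd5 x}"
    unfolding sum.distrib using finS by (simp add: card_filter_as_sum sum_distrib_left)
  ultimately have "6 * card (reps4 n) = card (reps4 (5 * n)) + 5 * card {x\<in>S. qdvd5 x}"
    unfolding S_def by simp
  then have "int (6 * card (reps4 n)) = int (card (reps4 (5 * n)) + 5 * card {x\<in>S. qdvd5 x})"
    by (rule arg_cong)
  then have "6 * int (card (reps4 n)) = int (card (reps4 (5 * n))) + 5 * int (card {x\<in>S. qdvd5 x})"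
    by (simp only: of_nat_add of_nat_mult of_nat_numeral)
  then have "int (card (reps4 (5 * n))) - int (card (reps4 n)) =
             5 * (int (card (reps4 n)) - int (card {x\<in>S. qdvd5 x}))"
    unfolding right_diff_distrib by linarith
  then show ?thesis by (simp add: cong_iff_dvd_diff)
qed

lemma square_mod_8: "(a::int)\<^sup>2 mod 8 \<in> {0, 1, 4}"
proof -
  define r where "r = a mod 8"
  have "a\<^sup>2 mod 8 = r\<^sup>2 mod 8" unfolding r_def by (simp add: power_mod)
  moreover have "0 \<le> r" "r < 8" unfolding r_def by simp_all
  then have "r = 0 \<or> r = 1 \<or> r = 2 \<or> r = 3 \<or> r = 4 \<or> r = 5 \<or> r = 6 \<or> r = 7" by linarith
  ultimately show ?thesis by (elim disjE) simp_all
qed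

lemma square_mod_4: "(a::int)\<^sup>2 mod 4 = (if even a then 0 else 1)"
proof -
  define r where "r = a mod 4"
  have "a\<^sup>2 mod 4 = r\<^sup>2 mod 4" unfolding r_def by (simp add: power_mod)
  moreover have "even a \<longleftrightarrow> even r"
    unfolding r_def by (simp add: even_mod_4_div_2 even_iff_mod_2_eq_zero mod_mod_cancel)
  moreover have "0 \<le> r" "r < 4" unfolding r_def by simp_all
  then have "r = 0 \<or> r = 1 \<or> r = 2 \<or> r = 3" by linarith
  ultimately show ?thesis by (elim disjE) simp_all
qed

lemma mod_add3: "(x + y + z) mod m = (x mod m + y mod m + z mod m) mod (m::int)"
proof -
  have "[x + y + z = x mod m + y mod m + z mod m] (mod m)"
    by (intro cong_add) (simp_all add: cong_def)
  then show ?thesis by (simp add: cong_def)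
qed

lemma reps3_8n7: "reps3 (8 * n + 7) = {}"
proof -
  have "a\<^sup>2 + b\<^sup>2 + c\<^sup>2 \<noteq> int (8 * n + 7)" for a b c :: int
  proof
    assume "a\<^sup>2 + b\<^sup>2 + c\<^sup>2 = int (8 * n + 7)"
    moreover have "int (8 * n + 7) mod 8 = 7" by simp
    ultimately have "(a\<^sup>2 mod 8 + b\<^sup>2 mod 8 + c\<^sup>2 mod 8) mod 8 = 7"
      by (simp only: mod_add3[symmetric])
    with square_mod_8[of a] square_mod_8[of b] square_mod_8[of c] show False by auto
  qed
  then show ?thesis unfolding reps3_def by auto
qed

text \<open>If \<open>a\<^sup>2 + b\<^sup>2 + c\<^sup>2 \<equiv> 0 (mod 4)\<close> then \<open>a, b, c\<close> are even, so halving is a bijection from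
  \<open>reps3 (4n)\<close> onto \<open>reps3 n\<close>.\<close>

lemma even_of_sum_three_squares: "a\<^sup>2 + b\<^sup>2 + c\<^sup>2 = 4 * (m::int) \<Longrightarrow> even a \<and> even b \<and> even c"
proof -
  assume "a\<^sup>2 + b\<^sup>2 + c\<^sup>2 = 4 * m"
  then have "(a\<^sup>2 + b\<^sup>2 + c\<^sup>2) mod 4 = 0" by simp
  then have "(a\<^sup>2 mod 4 + b\<^sup>2 mod 4 + c\<^sup>2 mod 4) mod 4 = 0"
    by (simp only: mod_add3[symmetric])
  then show ?thesis unfolding square_mod_4 by (auto split: if_splits)
qed

lemma card_reps3_times_4: "card (reps3 (4 * n)) = card (reps3 n)"
proof -
  let ?double = "\<lambda>(a::int, b::int, c::int). (2 * a, 2 * b, 2 * c)"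
  have "bij_betw ?double (reps3 n) (reps3 (4 * n))"
  proof (rule bij_betw_imageI)
    show "inj_on ?double (reps3 n)" by (auto simp: inj_on_def)
    show "?double ` reps3 n = reps3 (4 * n)"
    proof (intro set_eqI iffI)
      fix x assume "x \<in> ?double ` reps3 n"
      then show "x \<in> reps3 (4 * n)" unfolding reps3_def by (auto simp: power_mult_distrib)
    next
      fix x assume "x \<in> reps3 (4 * n)"
      then obtain a b c where x: "x = (a, b, c)" and e: "a\<^sup>2 + b\<^sup>2 + c\<^sup>2 = 4 * int n"
        unfolding reps3_def by auto
      then obtain a' b' c' where abc: "a = 2 * a'" "b = 2 * b'" "c = 2 * c'"
        using even_of_sum_three_squares by (meson evenE)
      then have "a'\<^sup>2 + b'\<^sup>2 + c'\<^sup>2 = int n"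
        using e by (simp add: power_mult_distrib algebra_simps)
      then show "x \<in> ?double ` reps3 n"
        unfolding reps3_def using x abc by (auto intro!: image_eqI[where x = "(a', b', c')"])
    qed
  qed
  then show ?thesis by (simp add: bij_betw_same_card)
qed

lemma card_reps3_times_power_4: "card (reps3 (4 ^ k * m)) = card (reps3 m)"
  by (induction k) (simp_all add: mult.assoc card_reps3_times_4)

text \<open>For \<open>p = 5\<close>, the section hypothesis of \<open>overpartition_section_cong\<close> is the congruence
  \<open>r\<^sub>4(5m) \<equiv> r\<^sub>4(m)\<close>, and \<open>theta\<^sup>3\<close> counts sums of three squares:
  \<open>p\<^bsup>-\<^esup>(5n) \<equiv> (-1)\<^sup>n r\<^sub>3(n) (mod 5)\<close>.\<close>

theorem overpartition_5n_cong:
  "[int (overpartition_count (5 * n)) = (-1) ^ n * int (card (reps3 n))] (mod 5)"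
proof -
  have "fps_cong (fps_section 5 (theta ^ 4)) (theta ^ 4) 5"
    unfolding fps_cong_def fps_section_def
  proof
    fix m
    have "[(-1) ^ m * int (card (reps4 (5 * m))) = (-1) ^ m * int (card (reps4 m))] (mod 5)"
      by (intro cong_mult cong_refl sum_four_squares_cong)
    then show "[Abs_fps (\<lambda>n. (theta ^ 4) $ (5 * n)) $ m = (theta ^ 4) $ m] (mod 5)"
      by (simp add: theta_power4_nth power_mult)
  qed
  then have "[overpartition_fps $ (5 * n) = (theta ^ 3) $ n] (mod 5)"
    using overpartition_section_cong[of 5 n] by simp
  then show ?thesis by (simp add: overpartition_fps_def theta_power3_nth)
qed

theorem corollary1:
  fixes n \<alpha> :: nat
  shows "[int (overpartition_count (4 ^ \<alpha> * (40 * n + 35))) = 0] (mod 5) \<and>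
         [int (overpartition_count (5 * 4 ^ (\<alpha> + 1) * n))
          = (-1) ^ n * int (overpartition_count (5 * n))] (mod 5)"
proof
  have "4 ^ \<alpha> * (40 * n + 35) = 5 * (4 ^ \<alpha> * (8 * n + 7))" by simp
  moreover have "card (reps3 (4 ^ \<alpha> * (8 * n + 7))) = 0"
    by (simp add: card_reps3_times_power_4 reps3_8n7)
  ultimately show "[int (overpartition_count (4 ^ \<alpha> * (40 * n + 35))) = 0] (mod 5)"
    using overpartition_5n_cong[of "4 ^ \<alpha> * (8 * n + 7)"] by (simp only:) simp
next
  define m where "m = 4 ^ (\<alpha> + 1) * n"
  have "even m" unfolding m_def by simp
  moreover have "card (reps3 m) = card (reps3 n)"
    unfolding m_def by (rule card_reps3_times_power_4)
  ultimately have "[int (overpartition_count (5 * m)) = int (card (reps3 n))] (mod 5)"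
    using overpartition_5n_cong[of m] by simp
  moreover have "[(-1) ^ n * int (overpartition_count (5 * n)) = int (card (reps3 n))] (mod 5)"
    using cong_mult[OF cong_refl overpartition_5n_cong[of n], of "(-1) ^ n"]
    by (simp add: mult.assoc flip: power_add)
  ultimately show "[int (overpartition_count (5 * 4 ^ (\<alpha> + 1) * n))
                    = (-1) ^ n * int (overpartition_count (5 * n))] (mod 5)"
    unfolding m_def by (metis cong_sym cong_trans mult.assoc)
qed

end
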